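(* Let $\mathcal H$ be a complex separable Hilbert space, let $\mathbb{D}=\{z\in\mathbb{C}:|z|<1\}$, and let $F:\mathbb{D}\to\mathcal B(\mathcal H)$ be a function (no regularity assumed) such that (1) for every $z\in\mathbb{D}$, the real part $\operatorname{Re}F(z)=\tfrac12\big(F(z)+F(z)^*\big)$ is a positive contraction, i.e. $0\le \operatorname{Re}F(z)\le I$; (2) the function $z\mapsto F(z)+zF(z)^*$ is holomorphic on $\mathbb{D}$. Then $F$ is constant.
   Context: $\mathcal B(\mathcal H)$ denotes the algebra of bounded linear operators on $\mathcal H$, and $T^*$ is the adjoint of $T$. For self-adjoint operators, $S\le T$ means $T-S$ is positive semidefinite. *)

theory Defs
  imports "HOL-Analysis.Analysis"
begin

text \<open>The distribution has no complex inner-product spaces, so a complex Hilbert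
space is rendered as a real Banach space type 'h together with a complex scalar
multiplication sc (extending scaleR) and a complex inner product ci
(conjugate-linear in the first argument) inducing the norm.\<close>

definition complex_hilbert ::
  "(complex \<Rightarrow> 'h::banach \<Rightarrow> 'h) \<Rightarrow> ('h \<Rightarrow> 'h \<Rightarrow> complex) \<Rightarrow> bool" where
  "complex_hilbert sc ci \<longleftrightarrow>
     (\<forall>r x. sc (complex_of_real r) x = r *\<^sub>R x) \<and>
     (\<forall>a x y. sc a (x + y) = sc a x + sc a y) \<and>
     (\<forall>a b x. sc (a + b) x = sc a x + sc b x) \<and>
     (\<forall>a b x. sc a (sc b x) = sc (a * b) x) \<and>
     (\<forall>x. sc 1 x = x) \<and>
     (\<forall>x y. ci x y = cnj (ci y x)) \<and>
     (\<forall>x y z. ci (x + y) z = ci x z + ci y z) \<and>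
     (\<forall>c x y. ci (sc c x) y = cnj c * ci x y) \<and>
     (\<forall>x. norm x = sqrt (Re (ci x x)))"

definition separable_type :: "'h::topological_space itself \<Rightarrow> bool" where
  "separable_type _ \<longleftrightarrow> (\<exists>D::'h set. countable D \<and> closure D = UNIV)"

definition bounded_op :: "(complex \<Rightarrow> 'h::real_normed_vector \<Rightarrow> 'h) \<Rightarrow> ('h \<Rightarrow> 'h) \<Rightarrow> bool" where
  "bounded_op sc T \<longleftrightarrow> bounded_linear T \<and> (\<forall>c x. T (sc c x) = sc c (T x))"

definition adjoint_op :: "('h \<Rightarrow> 'h \<Rightarrow> complex) \<Rightarrow> ('h \<Rightarrow> 'h) \<Rightarrow> ('h \<Rightarrow> 'h)" where
  "adjoint_op ci T = (THE S. \<forall>x y. ci (T x) y = ci x (S y))"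

definition positive_op :: "('h \<Rightarrow> 'h \<Rightarrow> complex) \<Rightarrow> ('h \<Rightarrow> 'h) \<Rightarrow> bool" where
  "positive_op ci A \<longleftrightarrow> (\<forall>x. ci x (A x) \<in> \<real> \<and> 0 \<le> Re (ci x (A x)))"

definition op_le :: "('h \<Rightarrow> 'h \<Rightarrow> complex) \<Rightarrow> ('h \<Rightarrow> 'h::ab_group_add) \<Rightarrow> ('h \<Rightarrow> 'h) \<Rightarrow> bool" where
  "op_le ci S T \<longleftrightarrow> positive_op ci (\<lambda>x. T x - S x)"

definition re_op :: "(complex \<Rightarrow> 'h \<Rightarrow> 'h::ab_group_add) \<Rightarrow> ('h \<Rightarrow> 'h \<Rightarrow> complex) \<Rightarrow> ('h \<Rightarrow> 'h) \<Rightarrow> ('h \<Rightarrow> 'h)" where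
  "re_op sc ci T = (\<lambda>x. sc (1/2) (T x + adjoint_op ci T x))"

definition op_holomorphic_on ::
  "(complex \<Rightarrow> 'h::real_normed_vector \<Rightarrow> 'h) \<Rightarrow> (complex \<Rightarrow> 'h \<Rightarrow> 'h) \<Rightarrow> complex set \<Rightarrow> bool" where
  "op_holomorphic_on sc G U \<longleftrightarrow>
     (\<forall>z\<in>U. \<exists>L. bounded_op sc L \<and>
        ((\<lambda>w. onorm (\<lambda>x. sc (inverse (w - z)) (G w x - G z x) - L x)) \<longlongrightarrow> 0) (at z))"

end

theory Submission
  imports Defs "HOL-Complex_Analysis.Complex_Analysis"
begin

text \<open>For a fixed vector \<open>x\<close> the scalar function \<open>f z = \<langle>x, F z x\<rangle>\<close> satisfies
  \<open>0 \<le> Re f \<le> \<parallel>x\<parallel>\<^sup>2\<close>, and \<open>g = f + z cnj f\<close> is holomorphic. On the circle \<open>\<bar>z\<bar> = r\<close>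
  the function \<open>Re (g - z cnj g) = (1 - r\<^sup>2) Re f\<close> is the real part of a holomorphic
  function, so by the maximum principle it stays between \<open>0\<close> and \<open>(1 - r\<^sup>2) \<parallel>x\<parallel>\<^sup>2\<close>
  inside the circle. Letting \<open>r \<rightarrow> 1\<close> yields a holomorphic function with vanishing real
  part, hence a constant. Consequently \<open>(g z - g 0) / z = cnj (g 0) + d / (z - 1)\<close> with \<open>d\<close>
  imaginary, and since the left side has bounded real part, \<open>d = 0\<close>; so
  \<open>g z = g 0 + z cnj (g 0)\<close> and \<open>f\<close> is constant. A bounded operator on a complex Hilbert
  space is determined by its quadratic form, so \<open>F\<close> is constant. The adjoint in the
  hypotheses exists by the Riesz representation theorem, obtained from an element of
  minimal norm.\<close>

lemma Re_bounds_cball_if_sphere: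
  assumes hol: "f holomorphic_on S" and sub: "cball c r \<subseteq> S" and r: "0 < r"
    and sphere: "\<And>z. z \<in> sphere c r \<Longrightarrow> a \<le> Re (f z) \<and> Re (f z) \<le> b"
    and w: "w \<in> cball c r"
  shows "a \<le> Re (f w) \<and> Re (f w) \<le> b"
proof -
  have hol_int: "f holomorphic_on interior (cball c r)"
    using hol sub interior_subset by (meson holomorphic_on_subset order_trans)
  have cont: "continuous_on (closure (cball c r)) f"
    using holomorphic_on_imp_continuous_on[OF hol] sub by (auto intro: continuous_on_subset)
  have "Re (f w) \<le> b"
    by (rule maximum_real_frontier[OF hol_int cont bounded_cball _ w]) (use sphere r in auto)
  moreover have "Re (- f w) \<le> - a"
    by (rule maximum_real_frontier[of "\<lambda>z. - f z", OF _ _ bounded_cball _ w])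
      (use hol_int cont sphere r in \<open>auto intro: holomorphic_intros continuous_intros\<close>)
  ultimately show ?thesis by simp
qed

lemma holomorphic_constant_on_if_Re_constant:
  assumes hol: "f holomorphic_on S" and S: "open S" "connected S"
    and Re_f: "\<And>z. z \<in> S \<Longrightarrow> Re (f z) = a"
  shows "f constant_on S"
proof (rule ccontr)
  assume nc: "\<not> f constant_on S"
  then obtain z0 where z0: "z0 \<in> S" by (auto simp: constant_on_def)
  have "open (f ` S)"
    by (rule open_mapping_thm[OF hol S S(1) order_refl nc])
  then obtain e where e: "e > 0" "ball (f z0) e \<subseteq> f ` S"
    using z0 openE by blast
  have "f z0 + complex_of_real (e/2) \<in> ball (f z0) e"
    using e by (simp add: dist_norm)
  then obtain u where "u \<in> S" "f u = f z0 + complex_of_real (e/2)"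
    using e(2) by (metis imageE subsetD)
  then show False using Re_f[of u] Re_f[OF z0] e by simp
qed

lemma imaginary_eq_0_if_Re_quotient_bounded:
  assumes Re_d: "Re d = 0" and bd: "\<And>z. z \<in> ball 0 1 \<Longrightarrow> \<bar>Re (d / (z - 1))\<bar> \<le> B"
  shows "d = 0"
proof -
  have Im_d: "\<bar>Im d\<bar> \<le> 2 * s * B" if s: "0 < s" "s < 1" for s
  proof -
    define z where "z = Complex (1 - s) s"
    have "(cmod z)^2 = (1 - s)^2 + s^2" by (simp add: z_def cmod_power2)
    also have "\<dots> < 1" using s by (simp add: power2_eq_square algebra_simps)
    finally have "(cmod z)^2 < 1" .
    then have "z \<in> ball 0 1" by (simp add: power_less_one_iff)
    moreover have "Re (d / (z - 1)) = Im d / (2 * s)"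
      using s Re_d by (simp add: z_def Re_divide power2_eq_square divide_simps)
    ultimately have "\<bar>Im d / (2 * s)\<bar> \<le> B" using bd by metis
    then show ?thesis using s by (simp add: abs_divide divide_le_eq mult_ac)
  qed
  have "eventually (\<lambda>s. \<bar>Im d\<bar> \<le> 2 * s * B) (at_right 0)"
    by (rule eventually_mono[OF eventually_at_right_real[OF zero_less_one]]) (simp add: Im_d)
  moreover have "((\<lambda>s. 2 * s * B) \<longlongrightarrow> 2 * 0 * B) (at_right 0)"
    by (intro tendsto_intros)
  ultimately have "\<bar>Im d\<bar> \<le> 2 * 0 * B"
    by (intro tendsto_le[OF trivial_limit_at_right_real _ tendsto_const])
  then show ?thesis using Re_d by (simp add: complex_eq_iff)
qed

locale twisted_pair =
  fixes f g :: "complex \<Rightarrow> complex" and M :: real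
  assumes g_holomorphic: "g holomorphic_on ball 0 1"
    and g_eq: "\<And>z. z \<in> ball 0 1 \<Longrightarrow> g z = f z + z * cnj (f z)"
    and Re_f_bounds: "\<And>z. z \<in> ball 0 1 \<Longrightarrow> 0 \<le> Re (f z) \<and> Re (f z) \<le> M"
begin

definition quot :: "complex \<Rightarrow> complex" where
  "quot z = (if z = 0 then deriv g 0 else (g z - g 0) / z)"

lemma quot_holomorphic: "quot holomorphic_on ball 0 1"
  using pole_lemma[OF g_holomorphic, of 0] unfolding quot_def[abs_def] diff_zero by simp

lemma g_eq_quot: "g z = g 0 + z * quot z"
  by (simp add: quot_def)

text \<open>On the circle \<open>\<bar>z\<bar> = r\<close> we have \<open>r\<^sup>2 / z = cnj z\<close>, so the holomorphic function
  \<open>approx r\<close> has the same real part there as \<open>g z - z cnj (g z) = (1 - r\<^sup>2) f z\<close>.\<close>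

definition approx :: "real \<Rightarrow> complex \<Rightarrow> complex" where
  "approx r z = g z - complex_of_real (r^2) * quot z - cnj (g 0) * z"

lemma approx_holomorphic: "approx r holomorphic_on ball 0 1"
  unfolding approx_def[abs_def] by (intro holomorphic_intros quot_holomorphic g_holomorphic)

lemma approx_eq_approx_1: "approx r z = approx 1 z + complex_of_real (1 - r^2) * quot z"
  by (simp add: approx_def algebra_simps)

lemma Re_approx_sphere:
  assumes r: "0 < r" "r < 1" and z: "cmod z = r"
  shows "Re (approx r z) = (1 - r^2) * Re (f z)"
proof -
  have z_ball: "z \<in> ball 0 1" using z r by simp
  have cnj_z: "cnj z * z = complex_of_real (r^2)"
    using z complex_norm_square[of z] by (simp add: mult.commute)
  have z0: "z \<noteq> 0" using z r by auto
  have "complex_of_real (r^2) * quot z = (cnj z * z) * ((g z - g 0) / z)"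
    using z0 by (simp add: quot_def cnj_z)
  also have "\<dots> = cnj z * (g z - g 0)" using z0 by simp
  finally have "complex_of_real (r^2) * quot z = cnj z * (g z - g 0)" .
  then have "approx r z = g z - cnj z * g z + cnj z * g 0 - cnj (g 0) * z"
    by (simp add: approx_def algebra_simps)
  then have "Re (approx r z) = Re (g z - z * cnj (g z))"
    by simp
  also have "g z - z * cnj (g z) = complex_of_real (1 - r^2) * f z"
    using g_eq[OF z_ball] cnj_z by (simp add: algebra_simps)
  finally show ?thesis by simp
qed

lemma Re_approx_bounds:
  assumes r: "0 < r" "r < 1" and w: "cmod w \<le> r"
  shows "0 \<le> Re (approx r w) \<and> Re (approx r w) \<le> (1 - r^2) * M"
proof (rule Re_bounds_cball_if_sphere[OF approx_holomorphic _ r(1)])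
  show "cball 0 r \<subseteq> ball 0 1" using r by auto
  show "w \<in> cball 0 r" using w by simp
  fix z :: complex assume "z \<in> sphere 0 r"
  then have "cmod z = r" "z \<in> ball 0 1" using r by auto
  moreover have "0 \<le> 1 - r^2" using r by (simp add: power_le_one)
  ultimately show "0 \<le> Re (approx r z) \<and> Re (approx r z) \<le> (1 - r^2) * M"
    using Re_approx_sphere[OF r] Re_f_bounds by (simp add: mult_left_mono)
qed

lemma Re_approx_1:
  assumes w: "w \<in> ball 0 1"
  shows "Re (approx 1 w) = 0"
proof -
  define K where "K = M + cmod (quot w)"
  have bound: "\<bar>Re (approx 1 w)\<bar> \<le> (1 - r^2) * K" if r: "cmod w < r" "r < 1" for r
  proof -
    have r0: "0 < r" using r norm_ge_zero[of w] by linarith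
    have "0 \<le> 1 - r^2" using r r0 by (simp add: power_le_one)
    then have "\<bar>(1 - r^2) * Re (quot w)\<bar> \<le> (1 - r^2) * cmod (quot w)"
      by (simp add: abs_mult abs_Re_le_cmod mult_left_mono)
    moreover have "Re (approx 1 w) = Re (approx r w) - (1 - r^2) * Re (quot w)"
      by (simp add: approx_eq_approx_1[of r])
    ultimately show ?thesis
      using Re_approx_bounds[OF r0 r(2) less_imp_le[OF r(1)]]
      by (auto simp: K_def distrib_left abs_le_iff)
  qed
  have "eventually (\<lambda>r. \<bar>Re (approx 1 w)\<bar> \<le> (1 - r^2) * K) (at_left 1)"
    using w by (intro eventually_mono[OF eventually_at_left_real] bound) auto
  moreover have "((\<lambda>r. (1 - r^2) * K) \<longlongrightarrow> (1 - 1^2) * K) (at_left 1)"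
    by (intro tendsto_intros)
  ultimately have "\<bar>Re (approx 1 w)\<bar> \<le> (1 - 1^2) * K"
    by (intro tendsto_le[OF trivial_limit_at_left_real _ tendsto_const])
  then show ?thesis by simp
qed

lemma approx_1_constant:
  assumes z: "z \<in> ball 0 1"
  shows "approx 1 z = approx 1 0"
  using holomorphic_constant_on_if_Re_constant[OF approx_holomorphic open_ball connected_ball]
    Re_approx_1 z unfolding constant_on_def by (metis centre_in_ball zero_less_one)

lemma Re_quot_bounds:
  assumes z: "z \<in> ball 0 1"
  shows "0 \<le> Re (quot z) \<and> Re (quot z) \<le> M"
proof -
  define r where "r = (1 + cmod z) / 2"
  have r: "0 < r" "r < 1" "cmod z \<le> r"
    using z by (auto simp: r_def add_pos_nonneg)
  have "0 < 1 - r^2" using r by (simp add: power_less_one_iff)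
  moreover have "Re (approx r z) = (1 - r^2) * Re (quot z)"
    using approx_eq_approx_1[of r z] Re_approx_1[OF z] by simp
  ultimately show ?thesis
    using Re_approx_bounds[OF r] by (simp add: zero_le_mult_iff)
qed

lemma quot_eq:
  assumes z: "z \<in> ball 0 1"
  shows "quot z = cnj (g 0)"
proof -
  define d where "d = approx 1 0 - g 0 + cnj (g 0)"
  have d_eq: "(w - 1) * (quot w - cnj (g 0)) = d" if "w \<in> ball 0 1" for w
    using approx_1_constant[OF that] g_eq_quot[of w] by (simp add: approx_def d_def algebra_simps)
  have "d = 0"
  proof (rule imaginary_eq_0_if_Re_quotient_bounded)
    show "Re d = 0" using Re_approx_1[of 0] by (simp add: d_def)
    fix w :: complex assume w: "w \<in> ball 0 1"
    then have "w - 1 \<noteq> 0" by auto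
    then have "d / (w - 1) = quot w - cnj (g 0)" using d_eq[OF w] by (auto simp: field_simps)
    then show "\<bar>Re (d / (w - 1))\<bar> \<le> M + cmod (g 0)"
      using Re_quot_bounds[OF w] abs_Re_le_cmod[of "g 0"] by auto
  qed
  moreover have "z - 1 \<noteq> 0" using z by auto
  ultimately show ?thesis using d_eq[OF z] by simp
qed

lemma f_constant:
  assumes z: "z \<in> ball 0 1"
  shows "f z = f 0"
proof -
  define h where "h = f z - f 0"
  have "g z = g 0 + z * cnj (g 0)"
    using g_eq_quot[of z] quot_eq[OF z] by simp
  moreover have "g 0 = f 0" using g_eq[of 0] by simp
  ultimately have "h + z * cnj h = 0"
    using g_eq[OF z] by (simp add: h_def algebra_simps)
  then have "cmod h = cmod z * cmod h"
    by (metis add_eq_0_iff complex_mod_cnj norm_minus_cancel norm_mult)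
  then have "h = 0" using z by (metis mult_cancel_right1 norm_eq_zero less_irrefl mem_ball_0)
  then show ?thesis by (simp add: h_def)
qed

end

locale complex_hilbert_space =
  fixes sc :: "complex \<Rightarrow> 'h::banach \<Rightarrow> 'h" and ci :: "'h \<Rightarrow> 'h \<Rightarrow> complex"
  assumes complex_hilbert: "complex_hilbert sc ci"
begin

lemma sc_of_real: "sc (complex_of_real r) x = r *\<^sub>R x"
  using conjunct1[OF complex_hilbert[unfolded complex_hilbert_def]] by blast

lemma sc_add_right: "sc a (x + y) = sc a x + sc a y"
  and sc_sc: "sc a (sc b x) = sc (a * b) x"
  and ci_sym: "ci x y = cnj (ci y x)"
  and ci_add_left: "ci (x + y) z = ci x z + ci y z"
  and ci_sc_left: "ci (sc c x) y = cnj c * ci x y"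
  and norm_eq_sqrt_ci: "norm x = sqrt (Re (ci x x))"
  using complex_hilbert unfolding complex_hilbert_def by blast+

lemma ci_add_right: "ci x (y + z) = ci x y + ci x z"
  by (subst ci_sym) (simp add: ci_add_left ci_sym[of y x] ci_sym[of z x])

lemma ci_sc_right: "ci x (sc c y) = c * ci x y"
  by (subst ci_sym) (simp add: ci_sc_left ci_sym[of y x])

lemma ci_zero_left [simp]: "ci 0 y = 0"
  using ci_add_left[of 0 0 y] by simp

lemma ci_diff_left: "ci (x - y) z = ci x z - ci y z"
  using ci_add_left[of "x - y" y z] by simp

lemma ci_diff_right: "ci x (y - z) = ci x y - ci x z"
  using ci_add_right[of x "y - z" z] by simp

lemma ci_scaleR_right: "ci x (r *\<^sub>R y) = r *\<^sub>R ci x y"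
  using ci_sc_right[of x "complex_of_real r" y] by (simp add: sc_of_real scaleR_conv_of_real)

lemma ci_self: "ci x x = complex_of_real ((norm x)^2)"
proof -
  have "Im (ci x x) = 0" using ci_sym[of x x] by (simp add: complex_eq_iff)
  moreover have "0 \<le> Re (ci x x)"
    using norm_eq_sqrt_ci[of x] norm_ge_zero[of x] by (metis real_sqrt_lt_0_iff not_le)
  ultimately show ?thesis by (simp add: norm_eq_sqrt_ci complex_eq_iff)
qed

lemma Re_ci_self: "Re (ci x x) = (norm x)^2"
  by (simp add: ci_self)

lemma ci_self_eq_0_iff [simp]: "ci x x = 0 \<longleftrightarrow> x = 0"
  by (simp add: ci_self)

lemma ci_ext: "(\<And>x. ci x u = ci x v) \<Longrightarrow> u = v"
  using ci_self_eq_0_iff[of "u - v"] by (simp add: ci_diff_right ci_diff_left)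

lemma sc_diff_right: "sc c (x - y) = sc c x - sc c y"
  using sc_add_right[of c "x - y" y] by simp

lemma norm_sc: "norm (sc c x) = cmod c * norm x"
proof -
  have "ci (sc c x) (sc c x) = (c * cnj c) * ci x x"
    by (simp add: ci_sc_left ci_sc_right)
  also have "\<dots> = complex_of_real ((cmod c * norm x)^2)"
    by (simp only: ci_self complex_norm_square[symmetric] power_mult_distrib of_real_mult)
  finally have "(norm (sc c x))^2 = (cmod c * norm x)^2"
    by (simp only: ci_self of_real_eq_iff)
  then show ?thesis by (simp add: power2_eq_iff_nonneg)
qed

lemma bounded_linear_sc: "bounded_linear (sc c)"
proof -
  have "sc c (r *\<^sub>R x) = r *\<^sub>R sc c x" for r x
    by (metis sc_of_real sc_sc mult.commute)
  then show ?thesis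
    by (intro bounded_linear_intro[where K="cmod c"]) (auto simp: sc_add_right norm_sc mult.commute)
qed

lemma cauchy_schwarz: "cmod (ci x y) \<le> norm x * norm y"
proof (cases "x = 0")
  case False
  define a where "a = ci x y"
  define n where "n = (norm x)^2"
  define N where "N = complex_of_real n"
  have a_cnj: "cnj a * a = complex_of_real ((cmod a)^2)"
    using complex_norm_square[of a] by (simp only: mult.commute)
  have "ci (sc N y - sc a x) (sc N y - sc a x)
      = cnj N * N * ci y y - cnj N * a * ci y x - cnj a * N * ci x y + cnj a * a * ci x x"
    by (simp add: ci_diff_left ci_diff_right ci_sc_left ci_sc_right algebra_simps)
  also have "\<dots> = N * (N * ci y y - cnj a * a)"
    by (simp add: N_def n_def ci_self ci_sym[of y x] flip: a_def) (simp add: algebra_simps)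
  also have "\<dots> = complex_of_real (n * (n * (norm y)^2 - (cmod a)^2))"
    by (simp add: N_def ci_self a_cnj)
  finally have "0 \<le> n * (n * (norm y)^2 - (cmod a)^2)"
    by (metis ci_self of_real_eq_iff zero_le_power2)
  then have "(cmod a)^2 \<le> (norm x * norm y)^2"
    using False by (simp add: n_def zero_le_mult_iff power_mult_distrib)
  then show ?thesis unfolding a_def by (rule power2_le_imp_le) simp
qed simp

lemma bounded_linear_ci_right: "bounded_linear (ci x)"
  by (rule bounded_linear_intro[where K="norm x"])
    (simp_all add: ci_add_right ci_scaleR_right cauchy_schwarz mult.commute[of _ "norm x"])

lemma parallelogram:
  fixes x y :: 'h
  shows "(norm (x + y))^2 + (norm (x - y))^2 = 2 * (norm x)^2 + 2 * (norm y)^2"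
proof -
  have "ci (x + y) (x + y) + ci (x - y) (x - y) = 2 * ci x x + 2 * ci y y"
    by (simp add: ci_add_left ci_add_right ci_diff_left ci_diff_right algebra_simps)
  from arg_cong[OF this, of Re] show ?thesis by (simp add: Re_ci_self)
qed

lemma minimizing_sequence_Cauchy:
  fixes S :: "'h set"
  assumes midpoint: "\<And>x y. x \<in> S \<Longrightarrow> y \<in> S \<Longrightarrow> (1/2) *\<^sub>R (x + y) \<in> S"
    and D_le: "\<And>x. x \<in> S \<Longrightarrow> D \<le> (norm x)^2"
    and X_in: "\<And>n. X n \<in> S" and X_lt: "\<And>n. (norm (X n))^2 < D + inverse (real (Suc n))"
  shows "Cauchy X"
proof (rule CauchyI)
  have X_close: "(norm (X m - X n))^2 < 2 * inverse (real (Suc m)) + 2 * inverse (real (Suc n))"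
    for m n
  proof -
    have "D \<le> (norm ((1/2) *\<^sub>R (X m + X n)))^2" by (intro D_le midpoint X_in)
    then have "4 * D \<le> (norm (X m + X n))^2" by (simp add: power2_eq_square)
    then show ?thesis using parallelogram[of "X m" "X n"] X_lt[of m] X_lt[of n] by linarith
  qed
  fix e :: real assume e: "0 < e"
  obtain N where N: "inverse (real (Suc N)) < e^2 / 4"
    using reals_Archimedean[of "e^2 / 4"] e by auto
  have "norm (X m - X n) < e" if "N \<le> m" "N \<le> n" for m n
  proof -
    have "inverse (real (Suc m)) \<le> inverse (real (Suc N))"
      "inverse (real (Suc n)) \<le> inverse (real (Suc N))"
      using that by (simp_all add: le_imp_inverse_le)
    then have "(norm (X m - X n))^2 < e^2" using X_close[of m n] N by linarith
    then show ?thesis using e by (simp add: power_less_imp_less_base)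
  qed
  then show "\<exists>M. \<forall>m\<ge>M. \<forall>n\<ge>M. norm (X m - X n) < e" by blast
qed

lemma min_norm_exists:
  fixes S :: "'h set"
  assumes closed: "closed S" and nonempty: "S \<noteq> {}"
    and midpoint: "\<And>x y. x \<in> S \<Longrightarrow> y \<in> S \<Longrightarrow> (1/2) *\<^sub>R (x + y) \<in> S"
  shows "\<exists>z\<in>S. \<forall>x\<in>S. norm z \<le> norm x"
proof -
  define D where "D = Inf ((\<lambda>x. (norm x)^2) ` S)"
  have D_le: "D \<le> (norm x)^2" if "x \<in> S" for x
    unfolding D_def by (rule cInf_lower) (use that in \<open>auto intro: bdd_belowI[of _ 0]\<close>)
  have "\<exists>x\<in>S. (norm x)^2 < D + inverse (real (Suc n))" for n
    using cInf_lessD[of "(\<lambda>x. (norm x)^2) ` S" "D + inverse (real (Suc n))"] nonempty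
    by (auto simp: D_def)
  then obtain X where X_in: "\<And>n. X n \<in> S"
    and X_lt: "\<And>n. (norm (X n))^2 < D + inverse (real (Suc n))"
    by metis
  then obtain z where z: "X \<longlonglongrightarrow> z"
    using minimizing_sequence_Cauchy[OF midpoint D_le] Cauchy_convergent_iff convergent_def
    by metis
  have "z \<in> S" using closed_sequentially[OF closed X_in z] .
  moreover have "norm z \<le> norm x" if x: "x \<in> S" for x
  proof -
    have "(norm z)^2 \<le> (norm x)^2"
    proof (rule LIMSEQ_le[OF _ _ exI[of _ 0]])
      show "(\<lambda>n. (norm (X n))^2) \<longlonglongrightarrow> (norm z)^2" using z by (intro tendsto_intros)
      show "(\<lambda>n. (norm x)^2 + inverse (real (Suc n))) \<longlonglongrightarrow> (norm x)^2"
        using tendsto_add[OF tendsto_const LIMSEQ_inverse_real_of_nat] by simp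
      show "\<forall>n\<ge>0. (norm (X n))^2 \<le> (norm x)^2 + inverse (real (Suc n))"
        using X_lt D_le[OF x] by (metis add_le_cancel_right less_imp_le order.trans)
    qed
    then show ?thesis by (rule power2_le_imp_le) simp
  qed
  ultimately show ?thesis by blast
qed

lemma min_norm_orthogonal:
  assumes min: "\<And>t. norm z \<le> norm (z - sc t w)"
  shows "ci z w = 0"
proof (rule ccontr)
  assume "ci z w \<noteq> 0"
  define b where "b = ci z w"
  define k where "k = (cmod b)^2"
  define s where "s = inverse ((norm w)^2 + 1)"
  have k: "0 < k" using \<open>ci z w \<noteq> 0\<close> by (simp add: k_def b_def)
  have w_pos: "0 < (norm w)^2 + 1" by (simp add: add_nonneg_pos)
  then have s: "0 < s" "s * (norm w)^2 < 1" by (simp_all add: s_def divide_less_eq flip: divide_inverse_commute)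
  define t where "t = complex_of_real s * cnj b"
  have b_cnj: "cnj b * b = complex_of_real k"
    unfolding k_def using complex_norm_square[of b] by (simp only: mult.commute)
  have "ci (z - sc t w) (z - sc t w)
      = ci z z - t * ci z w - cnj t * ci w z + cnj t * t * ci w w"
    by (simp add: ci_diff_left ci_diff_right ci_sc_left ci_sc_right algebra_simps)
  also have "\<dots> = ci z z - 2 * complex_of_real s * (cnj b * b)
      + complex_of_real s * complex_of_real s * (cnj b * b) * ci w w"
    by (simp add: t_def ci_sym[of w z] flip: b_def)
  also have "\<dots> = complex_of_real ((norm z)^2 + s * k * (s * (norm w)^2 - 2))"
    by (simp only: b_cnj ci_self) (simp add: algebra_simps)
  finally have "(norm (z - sc t w))^2 = (norm z)^2 + s * k * (s * (norm w)^2 - 2)"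
    by (simp only: ci_self of_real_eq_iff)
  moreover have "(norm z)^2 \<le> (norm (z - sc t w))^2"
    using min[of t] by (simp add: power_mono)
  moreover have "s * k * (s * (norm w)^2 - 2) < 0"
    using s k by (intro mult_pos_neg) simp_all
  ultimately show False by linarith
qed

lemma riesz_representation:
  assumes bl: "bounded_linear \<phi>" and hom: "\<And>c x. \<phi> (sc c x) = c * \<phi> x"
  shows "\<exists>v. \<forall>x. \<phi> x = ci v x"
proof (cases "\<forall>x. \<phi> x = 0")
  case True
  then show ?thesis by (metis ci_zero_left)
next
  case False
  interpret \<phi>: bounded_linear \<phi> by (rule bl)
  define S where "S = {x. \<phi> x = 1}"
  from False obtain a where "\<phi> a \<noteq> 0" by blast
  then have "\<phi> (sc (inverse (\<phi> a)) a) = 1" by (simp add: hom)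
  then have "S \<noteq> {}" by (auto simp: S_def)
  moreover have "closed S"
    unfolding S_def by (intro closed_Collect_eq continuous_intros \<phi>.continuous_on)
  moreover have "(1/2) *\<^sub>R (x + y) \<in> S" if "x \<in> S" "y \<in> S" for x y
    using that by (simp add: S_def \<phi>.scaleR \<phi>.add scaleR_conv_of_real)
  ultimately obtain z where z: "\<phi> z = 1" and z_min: "\<And>x. \<phi> x = 1 \<Longrightarrow> norm z \<le> norm x"
    using min_norm_exists[of S] by (auto simp: S_def)
  have z_orth: "ci z w = 0" if "\<phi> w = 0" for w
    by (rule min_norm_orthogonal) (simp add: z_min \<phi>.diff hom z that)
  have "ci z z \<noteq> 0" using z by auto
  have "\<phi> x = ci (sc (inverse (cnj (ci z z))) z) x" for x
  proof -
    have "ci z (x - sc (\<phi> x) z) = 0" by (rule z_orth) (simp add: \<phi>.diff hom z)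
    then have "ci z x = \<phi> x * ci z z" by (simp add: ci_diff_right ci_sc_right)
    then show ?thesis using \<open>ci z z \<noteq> 0\<close> by (simp add: ci_sc_left)
  qed
  then show ?thesis by blast
qed

lemma adjoint_op_unique:
  assumes "\<And>x y. ci (T x) y = ci x (S y)"
  shows "adjoint_op ci T = S"
  unfolding adjoint_op_def
proof (rule the_equality)
  show "\<forall>x y. ci (T x) y = ci x (S y)" using assms by blast
  fix S' assume S': "\<forall>x y. ci (T x) y = ci x (S' y)"
  show "S' = S"
  proof
    fix y show "S' y = S y" by (rule ci_ext) (metis S' assms)
  qed
qed

lemma adjoint_op_eq:
  assumes T: "bounded_op sc T"
  shows "ci (T x) y = ci x (adjoint_op ci T y)"
proof -
  have "\<exists>v. \<forall>x. ci y (T x) = ci v x" for y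
  proof (rule riesz_representation)
    show "bounded_linear (\<lambda>x. ci y (T x))"
      using T bounded_linear_compose[OF bounded_linear_ci_right] unfolding bounded_op_def by blast
    show "ci y (T (sc c x)) = c * ci y (T x)" for c x
      using T by (simp add: bounded_op_def ci_sc_right)
  qed
  then obtain S where S: "\<And>y x. ci y (T x) = ci (S y) x" by metis
  then have "adjoint_op ci T = S" by (intro adjoint_op_unique) (metis ci_sym)
  then show ?thesis by (metis S ci_sym)
qed

lemma ci_adjoint_op_self:
  assumes "bounded_op sc T"
  shows "ci x (adjoint_op ci T x) = cnj (ci x (T x))"
  using adjoint_op_eq[OF assms] ci_sym by metis

lemma bounded_op_adjoint_op:
  assumes T: "bounded_op sc T"
  shows "bounded_op sc (adjoint_op ci T)"
proof -
  define A where "A = adjoint_op ci T"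
  have adj: "ci (T x) y = ci x (A y)" for x y
    unfolding A_def by (rule adjoint_op_eq[OF T])
  interpret T: bounded_linear T using T by (simp add: bounded_op_def)
  obtain K where K: "\<And>x. norm (T x) \<le> norm x * K" and "0 < K" using T.pos_bounded by blast
  have A_add: "A (x + y) = A x + A y" for x y
    by (rule ci_ext) (simp add: adj[symmetric] ci_add_right)
  have A_sc: "A (sc c y) = sc c (A y)" for c y
    by (rule ci_ext) (simp add: adj[symmetric] ci_sc_right)
  have A_bound: "norm (A y) \<le> norm y * K" for y
  proof (cases "A y = 0")
    case False
    have "(norm (A y))^2 = Re (ci (T (A y)) y)" by (simp add: adj Re_ci_self)
    also have "\<dots> \<le> norm (T (A y)) * norm y"
      using complex_Re_le_cmod cauchy_schwarz order_trans by blast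
    also have "\<dots> \<le> norm (A y) * (K * norm y)"
      using mult_right_mono[OF K[of "A y"] norm_ge_zero[of y]] by (simp add: mult.assoc)
    finally have "norm (A y) * norm (A y) \<le> norm (A y) * (K * norm y)"
      by (simp add: power2_eq_square)
    then show ?thesis using False by (simp add: mult.commute)
  qed (use \<open>0 < K\<close> in simp)
  have "bounded_linear A"
    by (rule bounded_linear_intro[OF A_add _ A_bound]) (metis A_sc sc_of_real)
  then show ?thesis using A_sc by (simp add: bounded_op_def A_def)
qed

lemma ci_re_op_self:
  assumes "bounded_op sc T"
  shows "ci x (re_op sc ci T x) = complex_of_real (Re (ci x (T x)))"
  using ci_adjoint_op_self[OF assms, of x]
  by (simp add: re_op_def ci_sc_right ci_add_right complex_add_cnj)

lemma bounded_op_eq_if_quadratic_forms_eq: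
  assumes S: "bounded_op sc S" and T: "bounded_op sc T"
    and eq: "\<And>x. ci x (S x) = ci x (T x)"
  shows "S = T"
proof -
  define D where "D y = S y - T y" for y
  interpret S: bounded_linear S using S by (simp add: bounded_op_def)
  interpret T: bounded_linear T using T by (simp add: bounded_op_def)
  have D_add: "D (x + y) = D x + D y" for x y by (simp add: D_def S.add T.add)
  have D_sc: "D (sc c x) = sc c (D x)" for c x
    using S T by (simp add: D_def bounded_op_def sc_diff_right)
  have D_form: "ci x (D x) = 0" for x by (simp add: D_def ci_diff_right eq)
  text \<open>Polarization: test the form on \<open>x + y\<close> and on \<open>x + i y\<close>.\<close>
  have "ci x (D y) = 0" for x y
  proof -
    have sum: "ci y (D x) + ci x (D y) = 0"
      using D_form[of "x + y"] by (simp add: D_add ci_add_left ci_add_right D_form)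
    have "ci (sc \<i> y) (D x) + ci x (D (sc \<i> y)) = 0"
      using D_form[of "x + sc \<i> y"] by (simp add: D_add ci_add_left ci_add_right D_form)
    then have "\<i> * ci x (D y) - \<i> * ci y (D x) = 0"
      by (simp add: D_sc ci_sc_left ci_sc_right)
    with sum have "2 * \<i> * ci x (D y) = 0" by (simp add: algebra_simps add_eq_0_iff)
    then show ?thesis by simp
  qed
  then have "D y = 0" for y by (metis ci_self_eq_0_iff)
  then show ?thesis by (auto simp: D_def)
qed

lemma op_holomorphic_on_imp_holomorphic_ci:
  assumes U: "open U" and G: "\<And>z. z \<in> U \<Longrightarrow> bounded_linear (G z)"
    and hol: "op_holomorphic_on sc G U"
  shows "(\<lambda>z. ci y (G z x)) holomorphic_on U"
  unfolding holomorphic_on_def field_differentiable_def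
proof
  fix z0 assume z0: "z0 \<in> U"
  obtain L where L: "bounded_op sc L"
    and lim: "((\<lambda>w. onorm (\<lambda>v. sc (inverse (w - z0)) (G w v - G z0 v) - L v)) \<longlongrightarrow> 0) (at z0)"
    using hol z0 unfolding op_holomorphic_on_def by blast
  define R where "R w v = sc (inverse (w - z0)) (G w v - G z0 v) - L v" for w v
  have R_bl: "bounded_linear (R w)" if "w \<in> U" for w
    using L unfolding R_def bounded_op_def
    by (intro bounded_linear_sub bounded_linear_compose[OF bounded_linear_sc] G that z0) auto
  have R_ci: "(ci y (G w x) - ci y (G z0 x)) / (w - z0) - ci y (L x) = ci y (R w x)" for w
    by (simp add: R_def ci_diff_right ci_sc_right divide_inverse mult.commute)
  have "((\<lambda>w. (ci y (G w x) - ci y (G z0 x)) / (w - z0) - ci y (L x)) \<longlongrightarrow> 0) (at z0)"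
  proof (rule Lim_null_comparison)
    show "\<forall>\<^sub>F w in at z0. norm ((ci y (G w x) - ci y (G z0 x)) / (w - z0) - ci y (L x))
        \<le> norm y * norm x * onorm (R w)"
    proof (rule eventually_mono[OF eventually_at_in_open[OF U z0]])
      fix w assume w: "w \<in> U - {z0}"
      have "cmod (ci y (R w x)) \<le> norm y * norm (R w x)" by (rule cauchy_schwarz)
      also have "\<dots> \<le> norm y * (onorm (R w) * norm x)"
        using onorm[OF R_bl[of w]] w by (simp add: mult_left_mono)
      finally show "norm ((ci y (G w x) - ci y (G z0 x)) / (w - z0) - ci y (L x))
          \<le> norm y * norm x * onorm (R w)" by (simp add: R_ci mult_ac)
    qed
    show "((\<lambda>w. norm y * norm x * onorm (R w)) \<longlongrightarrow> 0) (at z0)"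
      using lim unfolding R_def by (rule tendsto_mult_right_zero)
  qed
  then have "((\<lambda>w. ci y (G w x)) has_field_derivative ci y (L x)) (at z0)"
    by (simp add: has_field_derivative_iff LIM_zero_iff)
  then show "\<exists>f'. ((\<lambda>w. ci y (G w x)) has_field_derivative f') (at z0 within U)"
    by (blast intro: has_field_derivative_at_within)
qed

lemma twisted_pair_quadratic_form:
  assumes F: "\<forall>z\<in>ball 0 1. bounded_op sc (F z)"
    and pos: "\<forall>z\<in>ball 0 1. op_le ci (\<lambda>x. 0) (re_op sc ci (F z))"
    and contr: "\<forall>z\<in>ball 0 1. op_le ci (re_op sc ci (F z)) (\<lambda>x. x)"
    and holo: "op_holomorphic_on sc (\<lambda>z x. F z x + sc z (adjoint_op ci (F z) x)) (ball 0 1)"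
  shows "twisted_pair (\<lambda>z. ci x (F z x))
    (\<lambda>z. ci x (F z x + sc z (adjoint_op ci (F z) x))) ((norm x)^2)"
proof
  have "bounded_linear (\<lambda>x. F z x + sc z (adjoint_op ci (F z) x))" if "z \<in> ball 0 1" for z
  proof -
    have "bounded_op sc (F z)" using F that by blast
    then have "bounded_linear (F z)" "bounded_linear (adjoint_op ci (F z))"
      using bounded_op_adjoint_op unfolding bounded_op_def by blast+
    then show ?thesis by (intro bounded_linear_add bounded_linear_compose[OF bounded_linear_sc])
  qed
  then show "(\<lambda>z. ci x (F z x + sc z (adjoint_op ci (F z) x))) holomorphic_on ball 0 1"
    by (intro op_holomorphic_on_imp_holomorphic_ci[OF open_ball _ holo])
next
  fix z :: complex assume "z \<in> ball 0 1"
  then show "ci x (F z x + sc z (adjoint_op ci (F z) x)) = ci x (F z x) + z * cnj (ci x (F z x))"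
    using F by (simp add: ci_add_right ci_sc_right ci_adjoint_op_self)
next
  fix z :: complex assume "z \<in> ball 0 1"
  then have Fz: "bounded_op sc (F z)" using F by blast
  have "0 \<le> Re (ci x (re_op sc ci (F z) x - 0))" "0 \<le> Re (ci x (x - re_op sc ci (F z) x))"
    using pos contr \<open>z \<in> ball 0 1\<close> unfolding op_le_def positive_op_def by blast+
  then show "0 \<le> Re (ci x (F z x)) \<and> Re (ci x (F z x)) \<le> (norm x)^2"
    by (simp add: ci_diff_right Re_ci_self ci_re_op_self[OF Fz])
qed

end

theorem theorem2:
  fixes sc :: "complex \<Rightarrow> 'h::banach \<Rightarrow> 'h"
    and ci :: "'h \<Rightarrow> 'h \<Rightarrow> complex"
    and F :: "complex \<Rightarrow> 'h \<Rightarrow> 'h"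
  assumes H: "complex_hilbert sc ci"
    and sep: "separable_type TYPE('h)"
    and F_bop: "\<forall>z\<in>ball 0 1. bounded_op sc (F z)"
    and pos: "\<forall>z\<in>ball 0 1. op_le ci (\<lambda>x. 0) (re_op sc ci (F z))"
    and contr: "\<forall>z\<in>ball 0 1. op_le ci (re_op sc ci (F z)) (\<lambda>x. x)"
    and holo: "op_holomorphic_on sc (\<lambda>z x. F z x + sc z (adjoint_op ci (F z) x)) (ball 0 1)"
  shows "\<exists>C. \<forall>z\<in>ball 0 1. F z = C"
proof -
  interpret complex_hilbert_space sc ci by (rule complex_hilbert_space.intro[OF H])
  have "F z = F 0" if z: "z \<in> ball 0 1" for z
  proof (rule bounded_op_eq_if_quadratic_forms_eq)
    show "bounded_op sc (F z)" "bounded_op sc (F 0)" using F_bop z by simp_all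
    show "ci x (F z x) = ci x (F 0 x)" for x
      using twisted_pair.f_constant[OF twisted_pair_quadratic_form[OF F_bop pos contr holo] z] .
  qed
  then show ?thesis by blast
qed

end
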